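(* Let $X=(X,d,\mathcal M,\mu)$ be a Borel metric measure space, $1\le p<\infty$, $Y$ a topological space and $g:Y\to\Sigma$ an injective continuous map, where $\Sigma=(-1,1)^{\mathbb N}$. Suppose that for every $E\in\mathcal M$ with $\mu(E)=0$, $X\setminus E$ is dense in $X$, and that $x_m,x_\infty\in X$ ($m\in\mathbb N$) are points such that $d(x_1,x_\infty)<1$, the sequence $r_m=d(x_m,x_\infty)$ is strictly decreasing and converges to $0$, and $\mu(B(x_\infty,r_1))\le 1$. Then for each continuous map $\delta:Y\to(0,1)$ there exists an injective continuous map $\Phi:Y\to L^p(X)$, where each $\Phi(y)$ is given by a specific function $X\to\mathbb R$ (also denoted $\Phi(y)$), such that for every $y\in Y$: (1) $\|\Phi(y)\|_p\le\delta(y)$; (2) if $2^{-k}\le\delta(y)\le2^{-k+1}$, $k\in\mathbb N$, then $\Phi(y)(x)=0$ for all $x\in X\setminus B(x_\infty,r_{2k})$; (3) if $2^{-k}\le\delta(y)\le2^{-k+1}$, $k\in\mathbb N$, then $\Phi(y)(x_m)=\delta(y)$ for all $m\in\{2j+1: j>k\}\cup\{\infty\}$; (4) $\Phi(y)$ is continuous on $X\setminus\{x_\infty\}$; (5) $y\in g^{-1}(c_1^\Sigma)$ if and only if $\Phi(y)\in C(X)$. Moreover, if $B(x_\infty,r_1)$ is contained in a compact subset of $X$, then each $\Phi(y)$ has compact support and (5) holds with $C(X)$ replaced by $C_u(X)$.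
   Context: A metric measure space $X=(X,d,\mathcal M,\mu)$ consists of a metric space $(X,d)$, a $\sigma$-algebra $\mathcal M$ and a measure $\mu$ on $\mathcal M$; it is Borel if $\mathcal M$ contains all Borel sets. $B(x,\lambda)=\{y:d(x,y)<\lambda\}$. $L^p(X)$ is the Banach space of $\mathcal M$-measurable $f:X\to\mathbb R$ with $\|f\|_p=(\int_X|f|^pd\mu)^{1/p}<\infty$, modulo a.e. equality. $C(X)$ (resp. $C_u(X)$) is the set of elements of $L^p(X)$ that agree a.e. with a continuous (resp. uniformly continuous) function $X\to\mathbb R$. $c_1^\Sigma=\{(x(n))\in(-1,1)^{\mathbb N}:\lim_n x(n)=1\}$. *)

theory Defs
  imports "HOL-Analysis.Analysis"
begin

definition in_Lp :: "'a measure \<Rightarrow> real \<Rightarrow> ('a \<Rightarrow> real) \<Rightarrow> bool" where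
  "in_Lp M p f \<longleftrightarrow> f \<in> borel_measurable M \<and> integrable M (\<lambda>x. \<bar>f x\<bar> powr p)"

definition Lp_norm :: "'a measure \<Rightarrow> real \<Rightarrow> ('a \<Rightarrow> real) \<Rightarrow> real" where
  "Lp_norm M p f = (\<integral>x. \<bar>f x\<bar> powr p \<partial>M) powr (1 / p)"

definition in_C :: "('a::metric_space) measure \<Rightarrow> ('a \<Rightarrow> real) \<Rightarrow> bool" where
  "in_C M f \<longleftrightarrow> (\<exists>h. continuous_on UNIV h \<and> (AE x in M. f x = h x))"

definition in_Cu :: "('a::metric_space) measure \<Rightarrow> ('a \<Rightarrow> real) \<Rightarrow> bool" where
  "in_Cu M f \<longleftrightarrow> (\<exists>h. uniformly_continuous_on UNIV h \<and> (AE x in M. f x = h x))"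

definition c1Sigma :: "(nat \<Rightarrow> real) set" where
  "c1Sigma = {x. (\<forall>n. x n \<in> {-1<..<1}) \<and> x \<longlonglongrightarrow> 1}"

end

theory Submission
  imports Defs
begin

text \<open>
  Write \<open>t = d(x, x\<^sub>\<infinity>)\<close> and let \<open>L\<^sub>v\<close> be the piecewise linear function of \<open>t > 0\<close> taking
  the value \<open>v\<^sub>n\<close> at the node \<open>r\<^sub>n\<^sub>+\<^sub>1\<close> and constant beyond \<open>r\<^sub>1\<close>.  Put
  \<open>\<Phi>(y)(x) = \<delta>(y) \<cdot> C(t) \<cdot> L\<^sub>w\<^sub>(\<^sub>y\<^sub>)(t)\<close> with \<open>\<Phi>(y)(x\<^sub>\<infinity>) = \<delta>(y)\<close>: when \<open>\<delta>(y) \<approx> 2\<^sup>-\<^sup>k\<close>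
  the cut-off \<open>C\<close> vanishes for \<open>t \<ge> r\<^sub>2\<^sub>k\<close> and is \<open>1\<close> for \<open>t \<le> r\<^sub>2\<^sub>k\<^sub>+\<^sub>3\<close>, the even nodes carry
  the value \<open>1\<close>, and the odd nodes carry a coding of \<open>g(y)\<close> that repeats every coordinate
  infinitely often and tends to \<open>1\<close> exactly when \<open>g(y) \<in> c\<^sub>1\<close>.  Off \<open>x\<^sub>\<infinity>\<close> everything is continuous, and
  \<open>\<Phi>(y)\<close> is continuous at \<open>x\<^sub>\<infinity>\<close> iff its node values tend to \<open>\<delta>(y)\<close>, i.e. iff \<open>g(y) \<in> c\<^sub>1\<close>.
  Since null sets have dense complements, a continuous function agreeing a.e. with \<open>\<Phi>(y)\<close>
  agrees with it everywhere off \<open>x\<^sub>\<infinity>\<close>; this gives (5) and injectivity, the node values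
  determining \<open>\<delta>(y)\<close> and every coordinate of \<open>g(y)\<close>.  Continuity of \<open>y \<mapsto> \<Phi>(y)\<close> in \<open>L\<^sup>p\<close>
  holds because outside a small punctured ball the difference \<open>\<Phi>(y) - \<Phi>(y\<^sub>0)\<close> depends only on
  finitely many parameters, while the punctured ball has small measure.
\<close>

section \<open>Piecewise linear interpolation along a null sequence\<close>

text \<open>
  For \<open>s\<close> strictly decreasing to \<open>0\<close>, \<open>pl_hat s n\<close> is the hat function with peak \<open>1\<close> at
  \<open>s n\<close> and support \<open>[s (n + 1), s (n - 1)]\<close> (the first one is \<open>1\<close> on \<open>[s 0, \<infinity>)\<close>), so
  \<open>pl_interp s v\<close> is the piecewise linear function on \<open>(0, \<infinity>)\<close> with value \<open>v n\<close> at \<open>s n\<close>.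
  At \<open>t\<close> only the hats up to index \<open>(LEAST n. s n < t) + 1\<close> can be nonzero.
\<close>
definition pl_hat :: "(nat \<Rightarrow> real) \<Rightarrow> nat \<Rightarrow> real \<Rightarrow> real" where
  "pl_hat s n t = (case n of
       0 \<Rightarrow> max 0 (min 1 ((t - s 1) / (s 0 - s 1)))
     | Suc m \<Rightarrow> max 0 (min ((t - s (Suc n)) / (s n - s (Suc n))) ((s m - t) / (s m - s n))))"

definition pl_interp :: "(nat \<Rightarrow> real) \<Rightarrow> (nat \<Rightarrow> real) \<Rightarrow> real \<Rightarrow> real" where
  "pl_interp s v t = (\<Sum>n < Suc (Suc (LEAST n. s n < t)). v n * pl_hat s n t)"

lemma sum_lessThan_eq_if_vanishing_tails:
  fixes f :: "nat \<Rightarrow> 'b::comm_monoid_add"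
  assumes "\<forall>n\<ge>A. f n = 0" "\<forall>n\<ge>B. f n = 0"
  shows "sum f {..<A} = sum f {..<B}"
proof -
  have "sum f {..<A} = sum f {..<max A B}" "sum f {..<B} = sum f {..<max A B}"
    by (rule sum.mono_neutral_left; use assms in auto)+
  then show ?thesis by simp
qed

locale decreasing_null_sequence =
  fixes s :: "nat \<Rightarrow> real"
  assumes s_pos: "\<And>n. 0 < s n"
    and s_decreasing: "\<And>n. s (Suc n) < s n"
    and s_tendsto_0: "s \<longlonglongrightarrow> 0"
begin

lemma s_less_iff: "s n < s m \<longleftrightarrow> m < n"
proof -
  have "strict_mono (\<lambda>n. - s n)"
    unfolding strict_mono_Suc_iff using s_decreasing by simp
  then show ?thesis
    using strict_mono_less[of "\<lambda>n. - s n" m n] by simp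
qed

lemma s_le_iff: "s n \<le> s m \<longleftrightarrow> m \<le> n"
  using s_less_iff by (meson not_less)

lemma s_eventually_less: "0 < t \<Longrightarrow> \<exists>n. s n < t"
  using order_tendstoD(2)[OF s_tendsto_0] by (auto simp: eventually_sequentially)

lemma segment_exists:
  assumes "0 < t" "t < s 0"
  obtains k where "s (Suc k) \<le> t" "t < s k"
proof -
  define m where "m = (LEAST m. s m \<le> t)"
  obtain n where "s n < t" using s_eventually_less[OF assms(1)] by blast
  then have "s m \<le> t"
    unfolding m_def by (intro LeastI[of "\<lambda>m. s m \<le> t" n]) simp
  moreover have "m \<noteq> 0"
    by (rule ccontr) (use \<open>s m \<le> t\<close> assms(2) in simp)
  moreover have "t < s (m - 1)"
    using not_less_Least[of "m - 1" "\<lambda>m. s m \<le> t"] \<open>m \<noteq> 0\<close> unfolding m_def by simp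
  ultimately show ?thesis using that[of "m - 1"] by simp
qed

lemma pl_hat_Suc_eq_0: "s m \<le> t \<Longrightarrow> pl_hat s (Suc m) t = 0"
proof -
  assume "s m \<le> t"
  then have "(s m - t) / (s m - s (Suc m)) \<le> 0"
    using s_decreasing[of m] by (intro divide_nonpos_pos) auto
  then show ?thesis by (simp add: pl_hat_def)
qed

lemma pl_hat_eq_0_above: "Suc (Suc k) \<le> n \<Longrightarrow> s (Suc k) \<le> t \<Longrightarrow> pl_hat s n t = 0"
proof -
  assume "Suc (Suc k) \<le> n" "s (Suc k) \<le> t"
  moreover obtain m where "n = Suc m" using \<open>Suc (Suc k) \<le> n\<close> by (cases n) auto
  moreover have "s m \<le> s (Suc k)" using calculation s_le_iff by simp
  ultimately show ?thesis using pl_hat_Suc_eq_0 by simp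
qed

lemma pl_hat_eq_0_below: "Suc n \<le> k \<Longrightarrow> t \<le> s k \<Longrightarrow> pl_hat s n t = 0"
proof -
  assume "Suc n \<le> k" "t \<le> s k"
  then have "t \<le> s (Suc n)" using s_le_iff[of k "Suc n"] by linarith
  then have "(t - s (Suc n)) / (s n - s (Suc n)) \<le> 0"
    using s_decreasing[of n] by (intro divide_nonpos_pos) auto
  then show ?thesis by (cases n) (auto simp: pl_hat_def)
qed

lemma pl_hat_rising:
  assumes "s (Suc k) \<le> t" "t \<le> s k"
  shows "pl_hat s k t = (t - s (Suc k)) / (s k - s (Suc k))"
proof (cases k)
  case 0
  then show ?thesis using assms s_decreasing[of 0] by (simp add: pl_hat_def)
next
  case (Suc m)
  have "(t - s (Suc k)) / (s k - s (Suc k)) \<le> 1"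
    using assms s_decreasing[of k] by simp
  also have "1 \<le> (s m - t) / (s m - s k)"
    using assms Suc s_decreasing[of m] by simp
  finally show ?thesis
    using assms Suc s_decreasing[of k] by (simp add: pl_hat_def min_absorb1)
qed

lemma pl_hat_falling:
  assumes "s (Suc k) \<le> t" "t \<le> s k"
  shows "pl_hat s (Suc k) t = (s k - t) / (s k - s (Suc k))"
proof -
  have "(s k - t) / (s k - s (Suc k)) \<le> 1"
    using assms s_decreasing[of k] by simp
  also have "1 \<le> (t - s (Suc (Suc k))) / (s (Suc k) - s (Suc (Suc k)))"
    using assms s_decreasing[of "Suc k"] by simp
  finally show ?thesis
    using assms s_decreasing[of k] by (simp add: pl_hat_def min_absorb2)
qed

lemma pl_interp_eq_sum:
  assumes "0 < t" "\<forall>n\<ge>N. pl_hat s n t = 0"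
  shows "pl_interp s v t = (\<Sum>n<N. v n * pl_hat s n t)"
proof -
  let ?L = "LEAST n. s n < t"
  have "s ?L < t" using s_eventually_less[OF assms(1)] by (rule LeastI_ex)
  then have "s (Suc ?L) \<le> t" using s_decreasing[of ?L] by linarith
  then have "\<forall>n\<ge>Suc (Suc ?L). pl_hat s n t = 0" using pl_hat_eq_0_above by blast
  then show ?thesis unfolding pl_interp_def
    by (intro sum_lessThan_eq_if_vanishing_tails) (use assms in auto)
qed

lemma pl_interp_segment:
  assumes "s (Suc k) \<le> t" "t \<le> s k"
  shows "pl_interp s v t = v k * ((t - s (Suc k)) / (s k - s (Suc k)))
                         + v (Suc k) * ((s k - t) / (s k - s (Suc k)))"
proof -
  have "0 < t" using assms s_pos[of "Suc k"] by linarith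
  then have "pl_interp s v t = (\<Sum>n<Suc (Suc k). v n * pl_hat s n t)"
    by (rule pl_interp_eq_sum) (use pl_hat_eq_0_above assms in auto)
  also have "\<dots> = (\<Sum>n<k. v n * pl_hat s n t) + v k * pl_hat s k t + v (Suc k) * pl_hat s (Suc k) t"
    by simp
  also have "(\<Sum>n<k. v n * pl_hat s n t) = 0"
    by (rule sum.neutral) (use pl_hat_eq_0_below[OF _ assms(2)] in \<open>auto simp: Suc_le_eq\<close>)
  finally show ?thesis using pl_hat_rising[OF assms] pl_hat_falling[OF assms] by simp
qed

lemma pl_interp_node: "pl_interp s v (s k) = v k"
  using pl_interp_segment[of k "s k" v] s_decreasing[of k] by simp

lemma pl_interp_beyond: "s 0 \<le> t \<Longrightarrow> pl_interp s v t = v 0"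
proof -
  assume t: "s 0 \<le> t"
  then have "0 < t" using s_pos[of 0] by linarith
  moreover have "\<forall>n\<ge>Suc 0. pl_hat s n t = 0"
  proof (intro allI impI)
    fix n :: nat assume "Suc 0 \<le> n"
    then obtain m where "n = Suc m" by (cases n) auto
    moreover have "s m \<le> t" using t s_le_iff[of m 0] by simp
    ultimately show "pl_hat s n t = 0" using pl_hat_Suc_eq_0 by simp
  qed
  ultimately have "pl_interp s v t = (\<Sum>n<Suc 0. v n * pl_hat s n t)"
    by (rule pl_interp_eq_sum)
  moreover have "pl_hat s 0 t = 1"
    using t s_decreasing[of 0] by (simp add: pl_hat_def)
  ultimately show ?thesis by simp
qed

lemma pl_interp_segment_ge_min:
  assumes "s (Suc k) \<le> t" "t \<le> s k"
  shows "min (v k) (v (Suc k)) \<le> pl_interp s v t"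
proof -
  define l where "l = (t - s (Suc k)) / (s k - s (Suc k))"
  have d: "0 < s k - s (Suc k)" using s_decreasing[of k] by simp
  have l: "0 \<le> l" "l \<le> 1" unfolding l_def using d assms by auto
  have "(s k - t) / (s k - s (Suc k)) = 1 - l"
    unfolding l_def using d by (simp add: field_simps)
  then have "pl_interp s v t = v k * l + v (Suc k) * (1 - l)"
    using pl_interp_segment[OF assms] unfolding l_def by simp
  moreover have "min (v k) (v (Suc k)) * l \<le> v k * l"
    "min (v k) (v (Suc k)) * (1 - l) \<le> v (Suc k) * (1 - l)"
    using l by (auto intro: mult_right_mono)
  ultimately show ?thesis by (simp add: algebra_simps)
qed

lemma pl_interp_ge_tail:
  assumes "\<forall>m\<ge>N. a \<le> v m" "0 < t" "t < s N"
  shows "a \<le> pl_interp s v t"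
proof -
  have "t < s 0" using assms(3) s_le_iff[of N 0] by simp
  then obtain k where k: "s (Suc k) \<le> t" "t < s k" using segment_exists assms(2) by blast
  then have "s (Suc k) < s N" using assms(3) by linarith
  then have "N \<le> k" using s_less_iff by simp
  then have "a \<le> min (v k) (v (Suc k))" using assms(1) by simp
  also have "\<dots> \<le> pl_interp s v t" using k by (intro pl_interp_segment_ge_min) auto
  finally show ?thesis .
qed

lemma pl_interp_ge_head:
  assumes "\<forall>m\<le>N. a \<le> v m" "s N \<le> t"
  shows "a \<le> pl_interp s v t"
proof (cases "s 0 \<le> t")
  case True
  then show ?thesis using assms(1) pl_interp_beyond by simp
next
  case False
  have "0 < t" using assms(2) s_pos[of N] by linarith
  then obtain k where k: "s (Suc k) \<le> t" "t < s k" using segment_exists False by force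
  then have "s N < s k" using assms(2) by linarith
  then have "Suc k \<le> N" using s_less_iff by simp
  then have "a \<le> min (v k) (v (Suc k))" using assms(1) by simp
  also have "\<dots> \<le> pl_interp s v t" using k by (intro pl_interp_segment_ge_min) auto
  finally show ?thesis .
qed

lemma pl_interp_uminus: "pl_interp s (\<lambda>n. - v n) t = - pl_interp s v t"
  unfolding pl_interp_def by (simp only: mult_minus_left sum_negf)

lemma pl_interp_diff: "pl_interp s v t - pl_interp s w t = pl_interp s (\<lambda>n. v n - w n) t"
  unfolding pl_interp_def by (simp only: left_diff_distrib sum_subtractf)

lemma pl_interp_le_tail:
  assumes "\<forall>m\<ge>N. v m \<le> b" "0 < t" "t < s N"
  shows "pl_interp s v t \<le> b"
  using pl_interp_ge_tail[of N "- b" "\<lambda>n. - v n"] assms by (simp add: pl_interp_uminus)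

lemma pl_interp_le_head:
  assumes "\<forall>m\<le>N. v m \<le> b" "s N \<le> t"
  shows "pl_interp s v t \<le> b"
  using pl_interp_ge_head[of N "- b" "\<lambda>n. - v n"] assms by (simp add: pl_interp_uminus)

lemma pl_interp_abs_le:
  assumes "\<forall>m. \<bar>v m\<bar> \<le> b" "0 < t"
  shows "\<bar>pl_interp s v t\<bar> \<le> b"
proof (cases "s 0 \<le> t")
  case True
  then show ?thesis using assms(1) pl_interp_beyond by simp
next
  case False
  have "- b \<le> v m" "v m \<le> b" for m
    using abs_le_D1[OF assms(1)[rule_format, of m]] abs_le_D2[OF assms(1)[rule_format, of m]]
    by linarith+
  then have "- b \<le> pl_interp s v t" "pl_interp s v t \<le> b"
    using False assms(2) pl_interp_ge_tail[of 0 "- b" v t] pl_interp_le_tail[of 0 v b t]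
    by simp_all
  then show ?thesis by simp
qed

lemma pl_interp_near_tail:
  assumes "\<forall>m\<ge>N. \<bar>v m - c\<bar> \<le> e" "0 < t" "t < s N"
  shows "\<bar>pl_interp s v t - c\<bar> \<le> e"
proof -
  have "c - e \<le> v m" "v m \<le> c + e" if "N \<le> m" for m
    using abs_le_D1[OF assms(1)[rule_format, OF that]] abs_le_D2[OF assms(1)[rule_format, OF that]]
    by linarith+
  then have "c - e \<le> pl_interp s v t" "pl_interp s v t \<le> c + e"
    using assms(2,3) pl_interp_ge_tail[of N "c - e" v t] pl_interp_le_tail[of N v "c + e" t]
    by simp_all
  then show ?thesis by (simp add: abs_le_iff)
qed

lemma pl_interp_abs_le_head:
  assumes "\<forall>m\<le>N. \<bar>v m\<bar> \<le> b" "s N \<le> t"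
  shows "\<bar>pl_interp s v t\<bar> \<le> b"
proof -
  have "- b \<le> v m" "v m \<le> b" if "m \<le> N" for m
    using abs_le_D1[OF assms(1)[rule_format, OF that]] abs_le_D2[OF assms(1)[rule_format, OF that]]
    by linarith+
  then have "- b \<le> pl_interp s v t" "pl_interp s v t \<le> b"
    using assms(2) pl_interp_ge_head[of N "- b" v t] pl_interp_le_head[of N v b t] by auto
  then show ?thesis by simp
qed

lemma continuous_on_pl_hat: "continuous_on A (pl_hat s n)"
proof -
  have "s m \<noteq> s (Suc m)" "s (Suc m) \<noteq> s m" for m
    using s_decreasing[of m] by simp_all
  then show ?thesis unfolding pl_hat_def by (cases n) (auto intro!: continuous_intros)
qed

lemma continuous_on_pl_interp: "continuous_on {0<..} (pl_interp s v)"
proof -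
  have "continuous_on {s N<..} (pl_interp s v)" for N
  proof -
    have "continuous_on {s N<..} (\<lambda>t. \<Sum>n<Suc (Suc N). v n * pl_hat s n t)"
      by (intro continuous_intros continuous_on_pl_hat)
    moreover have "pl_interp s v t = (\<Sum>n<Suc (Suc N). v n * pl_hat s n t)" if "s N < t" for t
      using that s_pos[of N] s_decreasing[of N]
      by (intro pl_interp_eq_sum) (auto intro: pl_hat_eq_0_above)
    ultimately show ?thesis by (metis (no_types, lifting) continuous_on_cong greaterThan_iff)
  qed
  moreover have "{0<..} = (\<Union>N. {s N<..})"
    using s_eventually_less s_pos by (auto intro: less_trans)
  ultimately show ?thesis by (metis continuous_on_open_UN open_greaterThan)
qed

end

section \<open>A coding of sequences converging to 1\<close>

text \<open>
  Every coordinate \<open>x n\<close> reappears at all indices \<open>prod_encode (n, i)\<close>, pulled towards \<open>1\<close>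
  by the factor \<open>1 / (i + 1)\<close>; this keeps convergence to \<open>1\<close> equivalent to that of \<open>x\<close>.
\<close>
definition c1_code :: "(nat \<Rightarrow> real) \<Rightarrow> nat \<Rightarrow> real" where
  "c1_code x q = 1 - (1 - x (fst (prod_decode q))) / (real (snd (prod_decode q)) + 1)"

lemma c1_code_prod_encode [simp]:
  "c1_code x (prod_encode (n, i)) = 1 - (1 - x n) / (real i + 1)"
  unfolding c1_code_def by simp

lemma abs_c1_code_le:
  assumes "\<forall>n. x n \<in> {-1<..<1}"
  shows "\<bar>c1_code x q\<bar> \<le> 1"
proof -
  obtain n i where q: "q = prod_encode (n, i)" by (metis prod_decode_inverse surj_pair)
  have "0 < 1 - x n" "1 - x n < 2" using assms by auto
  then have "0 \<le> (1 - x n) / (real i + 1)" "(1 - x n) / (real i + 1) \<le> 2"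
    by (auto simp: divide_le_eq)
  then show ?thesis unfolding q by simp
qed

lemma c1_code_tendsto_1:
  assumes x: "\<forall>n. x n \<in> {-1<..<1}" and lim: "x \<longlonglongrightarrow> 1"
  shows "c1_code x \<longlonglongrightarrow> 1"
proof (rule tendstoI)
  fix r :: real assume r: "0 < r"
  obtain N where N: "\<And>n. N \<le> n \<Longrightarrow> dist (x n) 1 < r"
    using tendstoD[OF lim r] by (auto simp: eventually_sequentially)
  obtain I :: nat where I: "2 / r < real I" using reals_Archimedean2 by blast
  have "finite (prod_encode ` ({..<N} \<times> {..<I}))" by simp
  then have "\<forall>\<^sub>F q in sequentially. q \<notin> prod_encode ` ({..<N} \<times> {..<I})"
    by (simp add: cofinite_eq_sequentially[symmetric] eventually_cofinite)
  then show "\<forall>\<^sub>F q in sequentially. dist (c1_code x q) 1 < r"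
  proof (rule eventually_mono)
    fix q assume q: "q \<notin> prod_encode ` ({..<N} \<times> {..<I})"
    obtain n i where q_eq: "q = prod_encode (n, i)" by (metis prod_decode_inverse surj_pair)
    have dist_eq: "dist (c1_code x q) 1 = \<bar>1 - x n\<bar> / (real i + 1)"
      unfolding q_eq by (simp add: dist_real_def abs_divide)
    from q q_eq have "N \<le> n \<or> I \<le> i" by auto
    then show "dist (c1_code x q) 1 < r"
    proof
      assume "N \<le> n"
      then have "\<bar>1 - x n\<bar> < r" using N by (simp add: dist_real_def abs_minus_commute)
      moreover have "\<bar>1 - x n\<bar> / (real i + 1) \<le> \<bar>1 - x n\<bar>"
        by (simp add: divide_le_eq mult_le_cancel_left1)
      ultimately show ?thesis using dist_eq by linarith
    next
      assume "I \<le> i"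
      then have "r * real I \<le> r * (real i + 1)" using r by (intro mult_left_mono) auto
      moreover have "2 < r * real I" using I r by (simp add: divide_less_eq mult.commute)
      moreover have "\<bar>1 - x n\<bar> < 2" using x[rule_format, of n] by (auto simp: abs_less_iff)
      ultimately show ?thesis using dist_eq by (simp add: divide_less_eq)
    qed
  qed
qed

lemma c1_code_tendsto_1_iff:
  assumes "\<forall>n. x n \<in> {-1<..<1}"
  shows "c1_code x \<longlonglongrightarrow> 1 \<longleftrightarrow> x \<longlonglongrightarrow> 1"
proof
  assume "c1_code x \<longlonglongrightarrow> 1"
  moreover have "strict_mono (\<lambda>n. prod_encode (n, 0))"
    unfolding strict_mono_Suc_iff by (simp add: prod_encode_def)
  ultimately have "(c1_code x \<circ> (\<lambda>n. prod_encode (n, 0))) \<longlonglongrightarrow> 1"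
    by (rule LIMSEQ_subseq_LIMSEQ)
  then show "x \<longlonglongrightarrow> 1" by (simp add: o_def)
qed (rule c1_code_tendsto_1[OF assms])

lemma abs_mult3_diff_le:
  fixes a b c a' b' c' :: real
  assumes "\<bar>b\<bar> \<le> 1" "\<bar>c\<bar> \<le> 1" "\<bar>a'\<bar> \<le> 1" "\<bar>b'\<bar> \<le> 1"
  shows "\<bar>a * b * c - a' * b' * c'\<bar> \<le> \<bar>a - a'\<bar> + \<bar>b - b'\<bar> + \<bar>c - c'\<bar>"
proof -
  have "a * b * c - a' * b' * c' = (a - a') * (b * c) + (b - b') * (a' * c) + (c - c') * (a' * b')"
    by (simp add: algebra_simps)
  moreover have "\<bar>b * c\<bar> \<le> 1" "\<bar>a' * c\<bar> \<le> 1" "\<bar>a' * b'\<bar> \<le> 1"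
    using assms by (simp_all add: abs_mult mult_le_one)
  then have "\<bar>(a - a') * (b * c)\<bar> \<le> \<bar>a - a'\<bar>" "\<bar>(b - b') * (a' * c)\<bar> \<le> \<bar>b - b'\<bar>"
    "\<bar>(c - c') * (a' * b')\<bar> \<le> \<bar>c - c'\<bar>"
    by (simp_all add: abs_mult mult_left_le)
  ultimately show ?thesis by linarith
qed

lemma AE_eq_imp_eq_on_open:
  fixes M :: "'a::topological_space measure" and f h :: "'a \<Rightarrow> real"
  assumes space: "space M = UNIV" and Borel: "sets borel \<subseteq> sets M"
    and null_dense: "\<forall>E\<in>sets M. emeasure M E = 0 \<longrightarrow> closure (UNIV - E) = UNIV"
    and U: "open U" and f: "continuous_on U f" and h: "continuous_on U h"
    and ae: "AE x in M. f x = h x"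
  shows "\<forall>x\<in>U. f x = h x"
proof -
  define D where "D = {x \<in> U. f x \<noteq> h x}"
  have "D = U \<inter> (\<lambda>x. f x - h x) -` (- {0})" unfolding D_def by auto
  moreover have "continuous_on U (\<lambda>x. f x - h x)" using f h by (intro continuous_intros)
  ultimately have "open D"
    using U continuous_on_open_vimage[of U "\<lambda>x. f x - h x"] by (auto simp: Int_commute)
  then have D: "D \<in> sets M" using Borel by auto
  have "{x \<in> space M. \<not> (x \<in> U \<longrightarrow> f x = h x)} = D" unfolding D_def space by auto
  moreover have "AE x in M. x \<in> U \<longrightarrow> f x = h x" using ae by (rule eventually_mono) simp
  ultimately have "emeasure M D = 0" using AE_iff_measurable[OF D] by simp
  then have "closure (UNIV - D) = UNIV" using null_dense D by simp
  moreover have "closed (UNIV - D)" using \<open>open D\<close> by (simp add: closed_Diff)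
  ultimately have "D = {}" by auto
  then show ?thesis unfolding D_def by auto
qed

lemma uniformly_continuous_on_compact_support:
  fixes f :: "'a::metric_space \<Rightarrow> real"
  assumes f: "continuous_on UNIV f" and S: "compact S" and vanish: "\<forall>x. x \<notin> S \<longrightarrow> f x = 0"
  shows "uniformly_continuous_on UNIV f"
  unfolding uniformly_continuous_on_def
proof (intro allI impI)
  fix \<epsilon> :: real assume \<epsilon>: "0 < \<epsilon>"
  define G where "G x = {z. dist (f z) (f x) < \<epsilon> / 2}" for x
  have "open B" if "B \<in> G ` S" for B
    using that unfolding G_def dist_real_def by (auto intro!: open_Collect_less continuous_intros f)
  moreover have "S \<subseteq> \<Union> (G ` S)" unfolding G_def using \<epsilon> by auto
  ultimately obtain e where e: "0 < e" "\<And>x. x \<in> S \<Longrightarrow> \<exists>G' \<in> G ` S. ball x e \<subseteq> G'"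
    using Heine_Borel_lemma[OF S] by metis
  have near: "dist (f x') (f x) < \<epsilon>" if x: "x \<in> S" and x': "dist x' x < e" for x x'
  proof -
    obtain c where "ball x e \<subseteq> G c" using e(2)[OF x] by blast
    moreover have "x \<in> ball x e" "x' \<in> ball x e" using e x' by (auto simp: dist_commute)
    ultimately have "x \<in> G c" "x' \<in> G c" by blast+
    then have "dist (f x) (f c) < \<epsilon> / 2" "dist (f x') (f c) < \<epsilon> / 2"
      unfolding G_def by auto
    then show ?thesis unfolding dist_real_def by linarith
  qed
  have "dist (f x') (f x) < \<epsilon>" if "dist x' x < e" for x x'
  proof (cases "x \<in> S \<or> x' \<in> S")
    case True
    then show ?thesis using near[of x x'] near[of x' x] that by (auto simp: dist_commute)
  next
    case False
    then show ?thesis using vanish \<epsilon> by simp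
  qed
  then show "\<exists>d>0. \<forall>x\<in>UNIV. \<forall>x'\<in>UNIV. dist x' x < d \<longrightarrow> dist (f x') (f x) < \<epsilon>"
    using e(1) by blast
qed

lemma measure_punctured_ball_tendsto_0:
  fixes M :: "'a::metric_space measure"
  assumes Borel: "sets borel \<subseteq> sets M" and r: "decseq r" "r \<longlonglongrightarrow> 0"
    and fin: "emeasure M (ball a (r 0)) < \<infinity>"
  shows "(\<lambda>n. measure M (ball a (r n) - {a})) \<longlonglongrightarrow> 0"
proof -
  let ?A = "\<lambda>n. ball a (r n) - {a}"
  have sets: "range ?A \<subseteq> sets M" using Borel by auto
  have dec: "decseq ?A" unfolding decseq_def
  proof (intro allI impI subsetI)
    fix m n x assume "m \<le> n" "x \<in> ?A n"
    then show "x \<in> ?A m" using r(1)[unfolded decseq_def, rule_format, OF \<open>m \<le> n\<close>] by auto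
  qed
  have "?A n \<subseteq> ball a (r 0)" for n
    using decseqD[OF r(1), of 0 n] by auto
  then have "emeasure M (?A n) \<le> emeasure M (ball a (r 0))" for n
    using Borel by (intro emeasure_mono) auto
  then have finite: "emeasure M (?A n) \<noteq> \<infinity>" for n using fin by (metis le_less_trans less_irrefl)
  have empty: "(\<Inter>n. ?A n) = {}"
  proof (intro equals0I)
    fix x assume "x \<in> (\<Inter>n. ?A n)"
    then have "x \<noteq> a" "\<forall>n. dist a x < r n" by auto
    moreover obtain n where "r n < dist a x"
      using order_tendstoD(2)[OF r(2), of "dist a x"] \<open>x \<noteq> a\<close>
      by (auto simp: eventually_sequentially)
    ultimately show False using less_asym by blast
  qed
  show ?thesis using Lim_measure_decseq[OF sets dec finite] unfolding empty by simp
qed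

locale embedding_construction =
  fixes M :: "('a::metric_space) measure" and p :: real
    and g :: "'b::topological_space \<Rightarrow> nat \<Rightarrow> real"
    and xs :: "nat \<Rightarrow> 'a" and xinf :: 'a and \<delta> :: "'b \<Rightarrow> real"
  assumes space: "space M = UNIV"
    and Borel: "sets borel \<subseteq> sets M"
    and p: "1 \<le> p"
    and g_Sigma: "\<forall>y n. g y n \<in> {-1<..<1}"
    and g_inj: "inj g"
    and g_cont: "continuous_on UNIV g"
    and null_dense: "\<forall>E\<in>sets M. emeasure M E = 0 \<longrightarrow> closure (UNIV - E) = UNIV"
    and r_decr: "\<forall>m\<ge>1. dist (xs (Suc m)) xinf < dist (xs m) xinf"
    and r_lim: "(\<lambda>m. dist (xs m) xinf) \<longlonglongrightarrow> 0"
    and ball_meas: "emeasure M (ball xinf (dist (xs 1) xinf)) \<le> 1"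
    and \<delta>_cont: "continuous_on UNIV \<delta>"
    and \<delta>_range: "\<forall>y. 0 < \<delta> y \<and> \<delta> y < 1"
begin

text \<open>\<open>s n\<close> is \<open>r\<^sub>n\<^sub>+\<^sub>1\<close>: the hypotheses constrain \<open>r\<^sub>m\<close> only for \<open>m \<ge> 1\<close>.\<close>
definition s :: "nat \<Rightarrow> real" where
  "s n = dist (xs (Suc n)) xinf"

definition level :: "real \<Rightarrow> real" where
  "level = pl_interp s (\<lambda>n. real n + 1)"

definition scale :: "real \<Rightarrow> real" where
  "scale d = - log 2 d"

text \<open>
  \<open>level (s n) = n + 1\<close>, so for \<open>2\<^sup>-\<^sup>k \<le> d \<le> 2\<^sup>1\<^sup>-\<^sup>k\<close> the cut-off vanishes for \<open>t \<ge> r\<^sub>2\<^sub>k\<close> and is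
  \<open>1\<close> for \<open>t \<le> r\<^sub>2\<^sub>k\<^sub>+\<^sub>3\<close>.
\<close>
definition cutoff :: "real \<Rightarrow> real \<Rightarrow> real" where
  "cutoff d t = max 0 (min 1 (level t - 2 * scale d - 2))"

text \<open>
  The even nodes pin the value at \<open>x\<^sub>\<infinity>\<close> of any continuous representative to \<open>\<delta> y\<close>; the odd
  nodes carry \<open>g y\<close>.
\<close>
definition node_value :: "'b \<Rightarrow> nat \<Rightarrow> real" where
  "node_value y n = (if even n then 1 else c1_code (g y) (n div 2))"

definition profile :: "'b \<Rightarrow> real \<Rightarrow> real" where
  "profile y = pl_interp s (node_value y)"

definition Phi :: "'b \<Rightarrow> 'a \<Rightarrow> real" where
  "Phi y x = (if x = xinf then \<delta> y
     else \<delta> y * cutoff (\<delta> y) (dist x xinf) * profile y (dist x xinf))"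

definition support_ball :: "'a set" where
  "support_ball = ball xinf (s 0)"

sublocale decreasing_null_sequence s
proof
  show dec: "s (Suc n) < s n" for n
    unfolding s_def using r_decr by simp
  show "0 < s n" for n
    using dec[of n] zero_le_dist[of "xs (Suc (Suc n))" xinf] unfolding s_def by linarith
  show "s \<longlonglongrightarrow> 0"
    unfolding s_def using LIMSEQ_Suc[OF r_lim] .
qed

lemma \<delta>_pos: "0 < \<delta> y"
  using \<delta>_range by auto

lemma support_ball_eq: "support_ball = ball xinf (dist (xs 1) xinf)"
  by (simp add: support_ball_def s_def)

lemma support_ball_sets: "support_ball \<in> sets M"
  using Borel by (auto simp: support_ball_def)

lemma emeasure_support_ball_le_1: "emeasure M support_ball \<le> 1"
  using ball_meas by (simp add: support_ball_eq)

lemma measure_support_ball_le_1: "measure M support_ball \<le> 1"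
proof -
  have "emeasure M support_ball < \<infinity>"
    using emeasure_support_ball_le_1 by (rule le_less_trans) simp
  then have "emeasure M support_ball = ennreal (measure M support_ball)"
    by (intro emeasure_eq_ennreal_measure) simp
  then show ?thesis using emeasure_support_ball_le_1 by simp
qed

lemma integrable_indicator_within_support_ball:
  assumes "A \<in> sets M" "A \<subseteq> support_ball"
  shows "integrable M (\<lambda>x. c * indicator A x :: real)"
proof -
  have "emeasure M A \<le> emeasure M support_ball"
    using assms support_ball_sets by (intro emeasure_mono)
  also have "\<dots> \<le> 1" by (rule emeasure_support_ball_le_1)
  also have "\<dots> < \<infinity>" by simp
  finally have "emeasure M A < \<infinity>" .
  then show ?thesis
    using integrable_real_indicator[OF assms(1)] by (intro integrable_mult_right) simp
qed

lemma xs_Suc_neq_xinf: "xs (Suc n) \<noteq> xinf"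
  using s_pos[of n] unfolding s_def by auto

lemma abs_profile_le_1: "0 < t \<Longrightarrow> \<bar>profile y t\<bar> \<le> 1"
  unfolding profile_def node_value_def using abs_c1_code_le g_Sigma
  by (intro pl_interp_abs_le) auto

lemma cutoff_range: "0 \<le> cutoff d t" "cutoff d t \<le> 1"
  by (auto simp: cutoff_def)

lemma abs_Phi_le: "\<bar>Phi y x\<bar> \<le> \<delta> y"
proof (cases "x = xinf")
  case True
  then show ?thesis using \<delta>_pos[of y] by (simp add: Phi_def)
next
  case False
  then have "\<bar>cutoff (\<delta> y) (dist x xinf) * profile y (dist x xinf)\<bar> \<le> 1"
    using cutoff_range abs_profile_le_1[of "dist x xinf" y] by (simp add: abs_mult mult_le_one)
  then show ?thesis
    using False \<delta>_pos[of y] by (simp add: Phi_def abs_mult mult.assoc mult_left_le)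
qed

lemma scale_ge:
  assumes "0 < d" "d \<le> 2 powr (- real k + 1)"
  shows "real k - 1 \<le> scale d"
proof -
  have "log 2 d \<le> log 2 (2 powr (- real k + 1))"
    using assms by (subst log_le_cancel_iff) auto
  then show ?thesis unfolding scale_def by simp
qed

lemma scale_le:
  assumes "2 powr (- real k) \<le> d"
  shows "scale d \<le> real k"
proof -
  have "0 < d" using assms by (rule less_le_trans[rotated]) simp
  then have "log 2 (2 powr (- real k)) \<le> log 2 d"
    using assms by (subst log_le_cancel_iff) auto
  then show ?thesis unfolding scale_def by simp
qed

lemma cutoff_eq_1:
  assumes "2 * scale d + 2 \<le> real N" "0 < t" "t \<le> s N"
  shows "cutoff d t = 1"
proof -
  have "real N + 1 \<le> level t"
  proof (cases "t = s N")
    case True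
    then show ?thesis by (simp add: level_def pl_interp_node)
  next
    case False
    then show ?thesis
      unfolding level_def using assms(2,3) by (intro pl_interp_ge_tail) auto
  qed
  then show ?thesis using assms(1) by (simp add: cutoff_def)
qed

lemma abs_cutoff_diff_le: "\<bar>cutoff d t - cutoff d' t\<bar> \<le> 2 * \<bar>scale d - scale d'\<bar>"
proof -
  have "\<bar>max 0 (min 1 a) - max 0 (min 1 b)\<bar> \<le> \<bar>a - b\<bar>" for a b :: real
    by (auto simp: max_def min_def)
  then have "\<bar>cutoff d t - cutoff d' t\<bar> \<le> \<bar>(level t - 2 * scale d - 2) - (level t - 2 * scale d' - 2)\<bar>"
    unfolding cutoff_def .
  also have "\<dots> = 2 * \<bar>scale d - scale d'\<bar>" by (simp add: abs_if)
  finally show ?thesis .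
qed

lemma Phi_centre: "Phi y xinf = \<delta> y"
  by (simp add: Phi_def)

lemma Phi_node: "Phi y (xs (Suc n)) = \<delta> y * cutoff (\<delta> y) (s n) * node_value y n"
  using xs_Suc_neq_xinf[of n] by (simp add: Phi_def profile_def pl_interp_node s_def[symmetric])

lemma Phi_node_eventually: "\<forall>\<^sub>F n in sequentially. Phi y (xs (Suc n)) = \<delta> y * node_value y n"
proof -
  obtain N :: nat where "2 * scale (\<delta> y) + 2 \<le> real N" using real_arch_simple by blast
  then have "cutoff (\<delta> y) (s n) = 1" if "N \<le> n" for n
    using that s_pos[of n] by (intro cutoff_eq_1[of _ n]) auto
  then show ?thesis unfolding eventually_sequentially by (auto simp: Phi_node)
qed

lemma Phi_outside_support_ball: "x \<notin> support_ball \<Longrightarrow> Phi y x = 0"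
proof -
  assume "x \<notin> support_ball"
  then have t: "s 0 \<le> dist x xinf" by (simp add: support_ball_def dist_commute)
  then have "x \<noteq> xinf" using s_pos[of 0] by auto
  have "level (dist x xinf) = 1" using t by (simp add: level_def pl_interp_beyond)
  moreover have "log 2 (\<delta> y) < 0" using \<delta>_range[rule_format, of y] by simp
  ultimately have "cutoff (\<delta> y) (dist x xinf) = 0" by (simp add: cutoff_def scale_def)
  then show ?thesis using \<open>x \<noteq> xinf\<close> by (simp add: Phi_def)
qed

lemma Phi_vanishes_outside:
  assumes "1 \<le> k" "\<delta> y \<le> 2 powr (- real k + 1)"
    and x: "x \<notin> ball xinf (dist (xs (2 * k)) xinf)"
  shows "Phi y x = 0"
proof -
  obtain n where n: "2 * k = Suc n" using assms(1) by (cases "2 * k") auto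
  have t: "s n \<le> dist x xinf" using x n by (simp add: s_def dist_commute)
  then have "x \<noteq> xinf" using s_pos[of n] by auto
  have "level (dist x xinf) \<le> real n + 1"
    unfolding level_def using t by (intro pl_interp_le_head[of n]) auto
  moreover have "real k - 1 \<le> scale (\<delta> y)" using scale_ge[OF \<delta>_pos assms(2)] .
  ultimately have "cutoff (\<delta> y) (dist x xinf) = 0" using n by (simp add: cutoff_def)
  then show ?thesis using \<open>x \<noteq> xinf\<close> by (simp add: Phi_def)
qed

lemma Phi_odd_nodes:
  assumes "2 powr (- real k) \<le> \<delta> y" "k < j"
  shows "Phi y (xs (2 * j + 1)) = \<delta> y"
proof -
  have "2 * scale (\<delta> y) + 2 \<le> real (2 * j)" using scale_le[OF assms(1)] assms(2) by simp
  then have "cutoff (\<delta> y) (s (2 * j)) = 1" using s_pos by (intro cutoff_eq_1) auto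
  then show ?thesis using Phi_node[of y "2 * j"] by (simp add: node_value_def)
qed

lemma continuous_on_Phi: "continuous_on (UNIV - {xinf}) (Phi y)"
proof -
  have dist: "continuous_on (UNIV - {xinf}) (\<lambda>x. dist x xinf)" by (intro continuous_intros)
  have "(\<lambda>x. dist x xinf) ` (UNIV - {xinf}) \<subseteq> {0<..}" by auto
  then have "continuous_on (UNIV - {xinf}) (\<lambda>x. pl_interp s v (dist x xinf))" for v
    using continuous_on_compose2[OF continuous_on_pl_interp dist] by blast
  then have "continuous_on (UNIV - {xinf})
      (\<lambda>x. \<delta> y * cutoff (\<delta> y) (dist x xinf) * profile y (dist x xinf))"
    unfolding cutoff_def level_def profile_def by (intro continuous_intros)
  then show ?thesis by (rule continuous_on_eq) (simp add: Phi_def)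
qed

lemma Phi_measurable: "Phi y \<in> borel_measurable M"
proof -
  have eq: "(\<lambda>x. if x \<in> UNIV - {xinf} then Phi y x else \<delta> y) = Phi y"
    by (rule ext) (simp add: Phi_def)
  have "(\<lambda>x. if x \<in> UNIV - {xinf} then Phi y x else \<delta> y) \<in> borel_measurable borel"
  proof (rule borel_measurable_continuous_on_if)
    show "UNIV - {xinf} \<in> sets borel" by (rule borel_open) (simp add: open_Diff)
    show "continuous_on (UNIV - {xinf}) (Phi y)" by (rule continuous_on_Phi)
    show "continuous_on (- (UNIV - {xinf})) (\<lambda>x. \<delta> y)" by (rule continuous_on_const)
  qed
  then have "Phi y \<in> borel_measurable borel" unfolding eq .
  then show ?thesis by (intro borel_measurable_subalgebra[OF Borel]) (simp_all add: space)
qed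

lemma powr_Phi_le_indicator: "\<bar>Phi y x\<bar> powr p \<le> \<delta> y powr p * indicator support_ball x"
proof (cases "x \<in> support_ball")
  case True
  have "\<bar>Phi y x\<bar> powr p \<le> \<delta> y powr p"
    using abs_Phi_le[of y x] p by (intro powr_mono2) auto
  then show ?thesis using True by simp
next
  case False
  then show ?thesis by (simp add: Phi_outside_support_ball)
qed

lemma Phi_in_Lp: "in_Lp M p (Phi y)"
  unfolding in_Lp_def
proof
  show "Phi y \<in> borel_measurable M" by (rule Phi_measurable)
  show "integrable M (\<lambda>x. \<bar>Phi y x\<bar> powr p)"
  proof (rule Bochner_Integration.integrable_bound)
    show "integrable M (\<lambda>x. \<delta> y powr p * indicator support_ball x)"
      by (rule integrable_indicator_within_support_ball[OF support_ball_sets order_refl])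
    show "(\<lambda>x. \<bar>Phi y x\<bar> powr p) \<in> borel_measurable M"
      by (rule measurable_abs_powr[OF Phi_measurable])
    show "AE x in M. norm (\<bar>Phi y x\<bar> powr p) \<le> norm (\<delta> y powr p * indicator support_ball x)"
      using powr_Phi_le_indicator[of y] by (intro AE_I2) simp
  qed
qed

lemma Lp_norm_Phi_le: "Lp_norm M p (Phi y) \<le> \<delta> y"
proof -
  have "(\<integral>x. \<bar>Phi y x\<bar> powr p \<partial>M) \<le> (\<integral>x. \<delta> y powr p * indicator support_ball x \<partial>M)"
    by (rule integral_mono'[OF integrable_indicator_within_support_ball[OF support_ball_sets order_refl]])
      (use powr_Phi_le_indicator in auto)
  also have "\<dots> = \<delta> y powr p * measure M support_ball" by (simp add: space)
  also have "\<dots> \<le> \<delta> y powr p" using measure_support_ball_le_1 by (simp add: mult_left_le)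
  finally have "Lp_norm M p (Phi y) \<le> (\<delta> y powr p) powr (1 / p)"
    unfolding Lp_norm_def using p by (intro powr_mono2) auto
  also have "\<dots> = \<delta> y" using p \<delta>_pos[of y] by (simp add: powr_powr)
  finally show ?thesis .
qed

lemma Phi_eq_off_centre:
  assumes "continuous_on (UNIV - {xinf}) h" "AE x in M. Phi y x = h x" "x \<noteq> xinf"
  shows "Phi y x = h x"
  using AE_eq_imp_eq_on_open[OF space Borel null_dense _ continuous_on_Phi assms(1,2)] assms(3)
  by (simp add: open_Diff)

lemma Phi_inj:
  assumes "AE x in M. Phi y x = Phi y' x"
  shows "y = y'"
proof -
  have "Phi y (xs (Suc n)) = Phi y' (xs (Suc n))" for n
    using Phi_eq_off_centre[OF continuous_on_Phi assms xs_Suc_neq_xinf] .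
  then have "\<forall>\<^sub>F n in sequentially. \<delta> y * node_value y n = \<delta> y' * node_value y' n"
    using eventually_elim2[OF Phi_node_eventually[of y] Phi_node_eventually[of y']] by simp
  then obtain N where N: "\<And>n. N \<le> n \<Longrightarrow> \<delta> y * node_value y n = \<delta> y' * node_value y' n"
    by (auto simp: eventually_sequentially)
  have \<delta>: "\<delta> y = \<delta> y'" using N[of "2 * N"] by (simp add: node_value_def)
  have "g y i = g y' i" for i
  proof -
    let ?q = "prod_encode (i, N)"
    have "N \<le> 2 * ?q + 1" using le_prod_encode_2[of N i] by linarith
    then have "\<delta> y * c1_code (g y) ?q = \<delta> y' * c1_code (g y') ?q"
      using N[of "2 * ?q + 1"] by (simp add: node_value_def)
    then have "c1_code (g y) ?q = c1_code (g y') ?q" using \<delta> \<delta>_pos[of y'] by simp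
    then show ?thesis by (simp add: divide_cancel_right)
  qed
  then have "g y = g y'" by (rule ext)
  then show ?thesis by (rule injD[OF g_inj])
qed

lemma node_value_tendsto_1:
  assumes "g y \<in> c1Sigma"
  shows "node_value y \<longlonglongrightarrow> 1"
proof (rule tendstoI)
  fix r :: real assume r: "0 < r"
  have "c1_code (g y) \<longlonglongrightarrow> 1"
    using assms g_Sigma c1_code_tendsto_1_iff[of "g y"] unfolding c1Sigma_def by simp
  then have "\<forall>\<^sub>F q in sequentially. dist (c1_code (g y) q) 1 < r" using r by (rule tendstoD)
  then obtain Q where Q: "\<And>q. Q \<le> q \<Longrightarrow> dist (c1_code (g y) q) 1 < r"
    by (auto simp: eventually_sequentially)
  have "dist (node_value y n) 1 < r" if "2 * Q \<le> n" for n
    using Q[of "n div 2"] that r by (auto simp: node_value_def)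
  then show "\<forall>\<^sub>F n in sequentially. dist (node_value y n) 1 < r"
    unfolding eventually_sequentially by blast
qed

lemma isCont_Phi_centre:
  assumes "g y \<in> c1Sigma"
  shows "isCont (Phi y) xinf"
  unfolding continuous_at_eps_delta
proof (intro allI impI)
  fix \<epsilon> :: real assume \<epsilon>: "0 < \<epsilon>"
  obtain N1 where N1: "\<And>n. N1 \<le> n \<Longrightarrow> dist (node_value y n) 1 < \<epsilon> / 2"
    using tendstoD[OF node_value_tendsto_1[OF assms], of "\<epsilon> / 2"] \<epsilon>
    by (auto simp: eventually_sequentially)
  obtain N2 :: nat where N2: "2 * scale (\<delta> y) + 2 \<le> real N2" using real_arch_simple by blast
  define N where "N = max N1 N2"
  have "dist (Phi y x) (Phi y xinf) < \<epsilon>" if x: "dist x xinf < s N" for x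
  proof (cases "x = xinf")
    case True
    then show ?thesis using \<epsilon> by simp
  next
    case False
    define t where "t = dist x xinf"
    have t: "0 < t" "t < s N" using False x by (simp_all add: t_def)
    have "cutoff (\<delta> y) t = 1"
      using N2 t by (intro cutoff_eq_1[of _ N]) (simp_all add: N_def)
    then have "Phi y x - Phi y xinf = \<delta> y * (profile y t - 1)"
      using False by (simp add: Phi_def t_def[symmetric] algebra_simps)
    then have "dist (Phi y x) (Phi y xinf) = \<delta> y * \<bar>profile y t - 1\<bar>"
      using \<delta>_pos[of y] by (simp add: dist_real_def abs_mult)
    also have "\<dots> \<le> \<bar>profile y t - 1\<bar>"
      using \<delta>_range[rule_format, of y] by (intro mult_left_le_one_le) auto
    also have "\<dots> \<le> \<epsilon> / 2"
    proof (unfold profile_def, rule pl_interp_near_tail[OF _ t])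
      show "\<forall>m\<ge>N. \<bar>node_value y m - 1\<bar> \<le> \<epsilon> / 2"
        using N1 unfolding N_def dist_real_def by (simp add: less_imp_le)
    qed
    finally show ?thesis using \<epsilon> by linarith
  qed
  then show "\<exists>d>0. \<forall>x. dist x xinf < d \<longrightarrow> dist (Phi y x) (Phi y xinf) < \<epsilon>"
    using s_pos[of N] by blast
qed

lemma continuous_Phi_of_c1:
  assumes "g y \<in> c1Sigma"
  shows "continuous_on UNIV (Phi y)"
proof -
  have "isCont (Phi y) x" for x
  proof (cases "x = xinf")
    case True
    then show ?thesis using isCont_Phi_centre[OF assms] by simp
  next
    case False
    have "\<forall>x\<in>UNIV - {xinf}. isCont (Phi y) x"
      using continuous_on_Phi[of y] continuous_on_eq_continuous_at[of "UNIV - {xinf}" "Phi y"]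
      by (simp add: open_Diff)
    then show ?thesis using False by blast
  qed
  then show ?thesis by (intro continuous_at_imp_continuous_on) auto
qed

lemma c1_of_Phi_nodes_convergent:
  assumes lim: "(\<lambda>n. Phi y (xs (Suc n))) \<longlonglongrightarrow> l"
  shows "g y \<in> c1Sigma"
proof -
  let ?a = "\<lambda>n. Phi y (xs (Suc n))"
  obtain N where N: "\<And>n. N \<le> n \<Longrightarrow> ?a n = \<delta> y * node_value y n"
    using Phi_node_eventually[of y] by (auto simp: eventually_sequentially)
  have "(?a \<circ> (\<lambda>j. 2 * j)) \<longlonglongrightarrow> l"
    by (rule LIMSEQ_subseq_LIMSEQ[OF lim]) (simp add: strict_mono_Suc_iff)
  moreover have "\<forall>\<^sub>F j in sequentially. (?a \<circ> (\<lambda>j. 2 * j)) j = \<delta> y"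
    unfolding eventually_sequentially using N by (intro exI[of _ N]) (simp add: node_value_def)
  then have "(?a \<circ> (\<lambda>j. 2 * j)) \<longlonglongrightarrow> \<delta> y" by (rule tendsto_eventually)
  ultimately have "l = \<delta> y" by (rule LIMSEQ_unique)
  have "(?a \<circ> (\<lambda>j. 2 * j + 1)) \<longlonglongrightarrow> \<delta> y"
    using LIMSEQ_subseq_LIMSEQ[OF lim, of "\<lambda>j. 2 * j + 1"] \<open>l = \<delta> y\<close>
    by (simp add: strict_mono_Suc_iff)
  moreover have "\<forall>\<^sub>F j in sequentially. (?a \<circ> (\<lambda>j. 2 * j + 1)) j = \<delta> y * c1_code (g y) j"
    unfolding eventually_sequentially using N by (intro exI[of _ N]) (simp add: node_value_def)
  ultimately have "(\<lambda>j. \<delta> y * c1_code (g y) j) \<longlonglongrightarrow> \<delta> y * 1"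
    by (simp add: Lim_transform_eventually)
  then have "c1_code (g y) \<longlonglongrightarrow> 1"
    using tendsto_mult_left_iff[of "\<delta> y" "c1_code (g y)" 1 sequentially] \<delta>_pos[of y] by simp
  then show ?thesis
    using g_Sigma c1_code_tendsto_1_iff[of "g y"] unfolding c1Sigma_def by simp
qed

lemma c1_of_in_C:
  assumes "in_C M (Phi y)"
  shows "g y \<in> c1Sigma"
proof -
  obtain h where h: "continuous_on UNIV h" "AE x in M. Phi y x = h x"
    using assms unfolding in_C_def by blast
  have "continuous_on (UNIV - {xinf}) h" using h(1) by (rule continuous_on_subset) simp
  then have "Phi y (xs (Suc n)) = h (xs (Suc n))" for n
    using Phi_eq_off_centre[OF _ h(2) xs_Suc_neq_xinf] by blast
  moreover have "(\<lambda>n. xs (Suc n)) \<longlonglongrightarrow> xinf"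
    using s_tendsto_0 unfolding s_def by (rule tendsto_dist_iff[THEN iffD2])
  then have "(\<lambda>n. h (xs (Suc n))) \<longlonglongrightarrow> h xinf"
    using h(1) by (intro isCont_tendsto_compose[of xinf h]) (simp_all add: continuous_on_eq_continuous_at)
  ultimately show ?thesis by (intro c1_of_Phi_nodes_convergent[of y "h xinf"]) simp
qed

lemma c1Sigma_iff_in_C: "g y \<in> c1Sigma \<longleftrightarrow> in_C M (Phi y)"
proof
  assume "g y \<in> c1Sigma"
  then show "in_C M (Phi y)"
    unfolding in_C_def using continuous_Phi_of_c1 by (intro exI[of _ "Phi y"]) simp
qed (rule c1_of_in_C)

lemma compact_closure_support_Phi:
  assumes "compact K" "ball xinf (dist (xs 1) xinf) \<subseteq> K"
  shows "compact (closure {x. Phi y x \<noteq> 0})"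
proof -
  have "{x. Phi y x \<noteq> 0} \<subseteq> support_ball" using Phi_outside_support_ball by blast
  then have "{x. Phi y x \<noteq> 0} \<subseteq> K" using assms(2) unfolding support_ball_eq by (rule order_trans)
  then have "closure {x. Phi y x \<noteq> 0} \<subseteq> K"
    using compact_imp_closed[OF assms(1)] by (rule closure_minimal)
  then have "K \<inter> closure {x. Phi y x \<noteq> 0} = closure {x. Phi y x \<noteq> 0}" by blast
  then show ?thesis
    using compact_Int_closed[OF assms(1) closed_closure[of "{x. Phi y x \<noteq> 0}"]] by simp
qed

lemma c1Sigma_iff_in_Cu:
  assumes "compact K" "ball xinf (dist (xs 1) xinf) \<subseteq> K"
  shows "g y \<in> c1Sigma \<longleftrightarrow> in_Cu M (Phi y)"
proof
  assume "g y \<in> c1Sigma"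
  have "\<forall>x. x \<notin> closure {x. Phi y x \<noteq> 0} \<longrightarrow> Phi y x = 0"
    using closure_subset[of "{x. Phi y x \<noteq> 0}"] by auto
  then have "uniformly_continuous_on UNIV (Phi y)"
    by (rule uniformly_continuous_on_compact_support[OF continuous_Phi_of_c1[OF \<open>g y \<in> c1Sigma\<close>]
          compact_closure_support_Phi[OF assms]])
  then show "in_Cu M (Phi y)" unfolding in_Cu_def by (intro exI[of _ "Phi y"]) simp
next
  assume "in_Cu M (Phi y)"
  then obtain h where "uniformly_continuous_on UNIV h" "AE x in M. Phi y x = h x"
    unfolding in_Cu_def by blast
  then have "in_C M (Phi y)"
    unfolding in_C_def by (intro exI[of _ h]) (simp add: uniformly_continuous_imp_continuous)
  then show "g y \<in> c1Sigma" by (rule c1_of_in_C)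
qed

text \<open>
  Outside the punctured ball \<open>B(x\<^sub>\<infinity>, s N) - {x\<^sub>\<infinity>}\<close>, \<open>\<bar>\<Phi>(y) - \<Phi>(y\<^sub>0)\<bar>\<close> is bounded by the
  following quantity, which only involves the nodes up to \<open>N\<close>.
\<close>
definition param_dist :: "'b \<Rightarrow> 'b \<Rightarrow> nat \<Rightarrow> real" where
  "param_dist y y0 N = \<bar>\<delta> y - \<delta> y0\<bar> + 2 * \<bar>scale (\<delta> y) - scale (\<delta> y0)\<bar>
     + (\<Sum>n\<le>N. \<bar>node_value y n - node_value y0 n\<bar>)"

lemma param_dist_nonneg: "0 \<le> param_dist y y0 N"
  unfolding param_dist_def by (intro add_nonneg_nonneg sum_nonneg) auto

lemma param_dist_tendsto_0: "((\<lambda>y. param_dist y y0 N) \<longlongrightarrow> 0) (at y0)"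
proof -
  have \<delta>: "(\<delta> \<longlongrightarrow> \<delta> y0) (at y0)"
    using \<delta>_cont unfolding continuous_on_def by simp
  have "((\<lambda>y. g y i) \<longlongrightarrow> g y0 i) (at y0)" for i
    using continuous_on_product_then_coordinatewise[OF g_cont, of i]
    unfolding continuous_on_def by simp
  then have "((\<lambda>y. node_value y n) \<longlongrightarrow> node_value y0 n) (at y0)" for n
    unfolding node_value_def c1_code_def by (cases "even n") (simp_all add: tendsto_intros)
  moreover have "((\<lambda>y. scale (\<delta> y)) \<longlongrightarrow> scale (\<delta> y0)) (at y0)"
    unfolding scale_def using \<delta>_pos[of y0] by (intro tendsto_intros \<delta>) auto
  ultimately have "((\<lambda>y. param_dist y y0 N) \<longlongrightarrow> param_dist y0 y0 N) (at y0)"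
    unfolding param_dist_def by (intro tendsto_intros \<delta>)
  then show ?thesis by (simp add: param_dist_def)
qed

lemma abs_Phi_diff_le_param_dist:
  assumes "x \<notin> ball xinf (s N) - {xinf}"
  shows "\<bar>Phi y x - Phi y0 x\<bar> \<le> param_dist y y0 N"
proof (cases "x = xinf")
  case True
  have "0 \<le> (\<Sum>n\<le>N. \<bar>node_value y n - node_value y0 n\<bar>)" by (intro sum_nonneg) simp
  then show ?thesis using True by (simp add: Phi_centre param_dist_def)
next
  case False
  define t where "t = dist x xinf"
  have t: "0 < t" "s N \<le> t" using False assms by (auto simp: t_def dist_commute)
  have profile: "\<bar>profile y t - profile y0 t\<bar> \<le> (\<Sum>n\<le>N. \<bar>node_value y n - node_value y0 n\<bar>)"
    unfolding profile_def pl_interp_diff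
  proof (rule pl_interp_abs_le_head[OF _ t(2)], intro allI impI)
    fix m assume "m \<le> N"
    then show "\<bar>node_value y m - node_value y0 m\<bar> \<le> (\<Sum>n\<le>N. \<bar>node_value y n - node_value y0 n\<bar>)"
      by (intro member_le_sum) simp_all
  qed
  have "Phi y x - Phi y0 x
      = \<delta> y * cutoff (\<delta> y) t * profile y t - \<delta> y0 * cutoff (\<delta> y0) t * profile y0 t"
    using False by (simp add: Phi_def t_def)
  also have "\<bar>\<dots>\<bar> \<le> \<bar>\<delta> y - \<delta> y0\<bar> + \<bar>cutoff (\<delta> y) t - cutoff (\<delta> y0) t\<bar>
      + \<bar>profile y t - profile y0 t\<bar>"
    using cutoff_range abs_profile_le_1[OF t(1)] \<delta>_range[rule_format, of y0]
    by (intro abs_mult3_diff_le) (simp_all add: abs_le_iff)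
  finally show ?thesis
    using abs_cutoff_diff_le[of "\<delta> y" t "\<delta> y0"] profile unfolding param_dist_def by linarith
qed

lemma powr_abs_Phi_diff_le:
  "\<bar>Phi y x - Phi y0 x\<bar> powr p \<le> param_dist y y0 N powr p * indicator support_ball x
     + 2 powr p * indicator (ball xinf (s N) - {xinf}) x"
proof (cases "x \<in> ball xinf (s N) - {xinf}")
  case True
  have "\<bar>Phi y x - Phi y0 x\<bar> \<le> \<bar>Phi y x\<bar> + \<bar>Phi y0 x\<bar>" by (rule abs_triangle_ineq4)
  also have "\<dots> \<le> 2"
    using abs_Phi_le[of y x] abs_Phi_le[of y0 x] \<delta>_range[rule_format, of y] \<delta>_range[rule_format, of y0]
    by linarith
  finally have "\<bar>Phi y x - Phi y0 x\<bar> powr p \<le> 2 powr p" using p by (intro powr_mono2) auto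
  moreover have "0 \<le> param_dist y y0 N powr p * indicator support_ball x" by simp
  moreover have "2 powr p * indicator (ball xinf (s N) - {xinf}) x = 2 powr p" using True by simp
  ultimately show ?thesis by linarith
next
  case False
  show ?thesis
  proof (cases "x \<in> support_ball")
    case True
    have "\<bar>Phi y x - Phi y0 x\<bar> powr p \<le> param_dist y y0 N powr p"
      using abs_Phi_diff_le_param_dist[OF False] p by (intro powr_mono2) auto
    then show ?thesis using True False by simp
  next
    case outside: False
    then show ?thesis using False by (simp add: Phi_outside_support_ball)
  qed
qed

lemma integral_powr_abs_Phi_diff_le:
  "(\<integral>x. \<bar>Phi y x - Phi y0 x\<bar> powr p \<partial>M)
     \<le> param_dist y y0 N powr p + 2 powr p * measure M (ball xinf (s N) - {xinf})"
proof -
  let ?A = "ball xinf (s N) - {xinf}"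
  have "?A \<in> sets M" using Borel by auto
  moreover have "?A \<subseteq> support_ball"
    using s_le_iff[of N 0] by (auto simp: support_ball_def)
  ultimately have int: "integrable M (\<lambda>x. 2 powr p * indicator ?A x)"
    by (rule integrable_indicator_within_support_ball)
  have int_B: "integrable M (\<lambda>x. param_dist y y0 N powr p * indicator support_ball x)"
    by (rule integrable_indicator_within_support_ball[OF support_ball_sets order_refl])
  have "(\<integral>x. \<bar>Phi y x - Phi y0 x\<bar> powr p \<partial>M)
      \<le> (\<integral>x. param_dist y y0 N powr p * indicator support_ball x + 2 powr p * indicator ?A x \<partial>M)"
    by (rule integral_mono'[OF Bochner_Integration.integrable_add[OF int_B int]])
      (use powr_abs_Phi_diff_le in auto)
  also have "\<dots> = param_dist y y0 N powr p * measure M support_ball + 2 powr p * measure M ?A"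
    using Bochner_Integration.integral_add[OF int_B int] by (simp add: space)
  also have "\<dots> \<le> param_dist y y0 N powr p + 2 powr p * measure M ?A"
    using measure_support_ball_le_1 by (simp add: mult_left_le)
  finally show ?thesis .
qed

lemma integral_powr_abs_Phi_diff_tendsto_0:
  "((\<lambda>y. \<integral>x. \<bar>Phi y x - Phi y0 x\<bar> powr p \<partial>M) \<longlongrightarrow> 0) (at y0)"
proof (rule order_tendstoI)
  fix a :: real assume "a < 0"
  moreover have "0 \<le> (\<integral>x. \<bar>Phi y x - Phi y0 x\<bar> powr p \<partial>M)" for y
    by (rule Bochner_Integration.integral_nonneg) simp
  ultimately show "\<forall>\<^sub>F y in at y0. a < (\<integral>x. \<bar>Phi y x - Phi y0 x\<bar> powr p \<partial>M)"
    by (intro always_eventually allI) (rule less_le_trans)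
next
  fix \<epsilon> :: real assume \<epsilon>: "0 < \<epsilon>"
  have "decseq s" unfolding decseq_def using s_le_iff by simp
  moreover have "emeasure M (ball xinf (s 0)) < \<infinity>"
    using emeasure_support_ball_le_1 unfolding support_ball_def by (rule le_less_trans) simp
  ultimately have "(\<lambda>N. 2 powr p * measure M (ball xinf (s N) - {xinf})) \<longlonglongrightarrow> 2 powr p * 0"
    using Borel s_tendsto_0 by (intro tendsto_mult_left measure_punctured_ball_tendsto_0)
  from order_tendstoD(2)[OF this, of "\<epsilon> / 2"] \<epsilon>
  have "\<forall>\<^sub>F N in sequentially. 2 powr p * measure M (ball xinf (s N) - {xinf}) < \<epsilon> / 2"
    by simp
  then obtain N where N: "2 powr p * measure M (ball xinf (s N) - {xinf}) < \<epsilon> / 2"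
    by (auto simp: eventually_sequentially)
  have "((\<lambda>y. param_dist y y0 N powr p) \<longlongrightarrow> 0) (at y0)"
    using p param_dist_nonneg
    by (intro tendsto_zero_powrI[OF param_dist_tendsto_0 tendsto_const]) auto
  from order_tendstoD(2)[OF this, of "\<epsilon> / 2"] \<epsilon>
  have "\<forall>\<^sub>F y in at y0. param_dist y y0 N powr p < \<epsilon> / 2" by simp
  then show "\<forall>\<^sub>F y in at y0. (\<integral>x. \<bar>Phi y x - Phi y0 x\<bar> powr p \<partial>M) < \<epsilon>"
  proof (rule eventually_mono)
    fix y assume "param_dist y y0 N powr p < \<epsilon> / 2"
    then show "(\<integral>x. \<bar>Phi y x - Phi y0 x\<bar> powr p \<partial>M) < \<epsilon>"
      using integral_powr_abs_Phi_diff_le[of y y0 N] N by linarith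
  qed
qed

lemma Lp_norm_Phi_diff_tendsto_0:
  "((\<lambda>y. Lp_norm M p (\<lambda>x. Phi y x - Phi y0 x)) \<longlongrightarrow> 0) (at y0)"
  unfolding Lp_norm_def
proof (rule tendsto_zero_powrI[OF integral_powr_abs_Phi_diff_tendsto_0 tendsto_const])
  show "\<forall>\<^sub>F y in at y0. 0 \<le> (\<integral>x. \<bar>Phi y x - Phi y0 x\<bar> powr p \<partial>M)"
    by (intro always_eventually allI Bochner_Integration.integral_nonneg) simp
  show "0 < 1 / p" using p by simp
qed

end

theorem mainTheorem7:
  fixes M :: "('a::metric_space) measure"
    and p :: real
    and g :: "'b::topological_space \<Rightarrow> (nat \<Rightarrow> real)"
    and xs :: "nat \<Rightarrow> 'a" and xinf :: 'a
    and \<delta> :: "'b \<Rightarrow> real"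
  assumes space: "space M = UNIV"
    and Borel: "sets borel \<subseteq> sets M"
    and p: "1 \<le> p"
    and g_Sigma: "\<forall>y n. g y n \<in> {-1<..<1}"
    and g_inj: "inj g"
    and g_cont: "continuous_on UNIV g"
    and null_dense: "\<forall>E\<in>sets M. emeasure M E = 0 \<longrightarrow> closure (UNIV - E) = UNIV"
    and x1: "dist (xs 1) xinf < 1"
    and r_decr: "\<forall>m\<ge>1. dist (xs (Suc m)) xinf < dist (xs m) xinf"
    and r_lim: "(\<lambda>m. dist (xs m) xinf) \<longlonglongrightarrow> 0"
    and ball_meas: "emeasure M (ball xinf (dist (xs 1) xinf)) \<le> 1"
    and \<delta>_cont: "continuous_on UNIV \<delta>"
    and \<delta>_range: "\<forall>y. 0 < \<delta> y \<and> \<delta> y < 1"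
  shows "\<exists>\<Phi> :: 'b \<Rightarrow> 'a \<Rightarrow> real.
           (\<forall>y. in_Lp M p (\<Phi> y))
         \<and> (\<forall>y y'. (AE x in M. \<Phi> y x = \<Phi> y' x) \<longrightarrow> y = y')
         \<and> (\<forall>y0. ((\<lambda>y. Lp_norm M p (\<lambda>x. \<Phi> y x - \<Phi> y0 x)) \<longlongrightarrow> 0) (at y0))
         \<and> (\<forall>y. Lp_norm M p (\<Phi> y) \<le> \<delta> y
               \<and> (\<forall>k::nat. k \<ge> 1 \<longrightarrow> 2 powr (- real k) \<le> \<delta> y \<longrightarrow> \<delta> y \<le> 2 powr (- real k + 1) \<longrightarrow>
                    (\<forall>x. x \<notin> ball xinf (dist (xs (2 * k)) xinf) \<longrightarrow> \<Phi> y x = 0))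
               \<and> (\<forall>k::nat. k \<ge> 1 \<longrightarrow> 2 powr (- real k) \<le> \<delta> y \<longrightarrow> \<delta> y \<le> 2 powr (- real k + 1) \<longrightarrow>
                    (\<forall>j>k. \<Phi> y (xs (2 * j + 1)) = \<delta> y) \<and> \<Phi> y xinf = \<delta> y)
               \<and> continuous_on (UNIV - {xinf}) (\<Phi> y)
               \<and> (g y \<in> c1Sigma \<longleftrightarrow> in_C M (\<Phi> y)))
         \<and> ((\<exists>K. compact K \<and> ball xinf (dist (xs 1) xinf) \<subseteq> K) \<longrightarrow>
              (\<forall>y. compact (closure {x. \<Phi> y x \<noteq> 0})
                   \<and> (g y \<in> c1Sigma \<longleftrightarrow> in_Cu M (\<Phi> y))))"
proof -
  interpret embedding_construction M p g xs xinf \<delta>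
    by unfold_locales
      (fact space Borel p g_Sigma g_inj g_cont null_dense r_decr r_lim ball_meas \<delta>_cont \<delta>_range)+
  show ?thesis
    apply (intro exI[of _ Phi] conjI allI impI)
    subgoal by (rule Phi_in_Lp)
    subgoal by (rule Phi_inj)
    subgoal by (rule Lp_norm_Phi_diff_tendsto_0)
    subgoal by (rule Lp_norm_Phi_le)
    subgoal by (rule Phi_vanishes_outside; assumption)
    subgoal by (rule Phi_odd_nodes; assumption)
    subgoal by (rule Phi_centre)
    subgoal by (rule continuous_on_Phi)
    subgoal by (rule c1Sigma_iff_in_C)
    subgoal by (elim exE conjE) (rule compact_closure_support_Phi; assumption)
    subgoal by (elim exE conjE) (rule c1Sigma_iff_in_Cu; assumption)
    done
qed

end
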